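(* Let $P_1:\mathbb R^n\to\mathbb R$ be convex and continuous, and for $i=1,\dots,m$ let $A_i\in\mathbb R^{q_i\times n}$ and $l_i:\mathbb R^{q_i}\to\mathbb R$ be strictly convex; let $g(x):=(l_1(A_1x),\dots,l_m(A_mx))$ with $\{x:g(x)\le0\}\ne\emptyset$, and $F(x):=P_1(x)+\delta_{\{g\le0\}}(x)$. Let $\bar x\in\operatorname{Arg\,min}F$. Suppose that (i) there exists a Lagrange multiplier $\bar\lambda\in\mathbb R^m_+$ for the problem $\min_x F(x)$, and the function $x\mapsto P_1(x)+\langle\bar\lambda,g(x)\rangle$ is a KL function with exponent $\alpha\in(0,1)$; and (ii) strict complementarity holds at $(\bar x,\bar\lambda)$: for every $i$ with $\bar\lambda_i=0$ one has $l_i(A_i\bar x)<0$. Then $F$ satisfies the KL property at $\bar x$ with exponent $\alpha$.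
   Context: $\delta_C$ denotes the indicator function of $C$ ($0$ on $C$, $+\infty$ outside); vector inequalities are componentwise; $\partial$ denotes the (convex) subdifferential. A Lagrange multiplier for $\min_x F(x)$ is a vector $\bar\lambda\in\mathbb R^m_+$ such that $\inf_{x\in\mathbb R^n}\{P_1(x)+\langle\bar\lambda,g(x)\rangle\}=\inf_{x\in\mathbb R^n}F(x)>-\infty$. KL property with exponent $\alpha\in[0,1)$: a proper closed $h$ has it at $\hat x\in{\rm dom}\,\partial h$ if there exist $a\in(0,\infty]$, a neighborhood $V$ of $\hat x$ and $a_0>0$ such that $a_0(1-\alpha)(h(x)-h(\hat x))^{-\alpha}\,{\rm dist}(0,\partial h(x))\ge1$ for all $x\in V$ with $h(\hat x)<h(x)<h(\hat x)+a$; $h$ is a KL function with exponent $\alpha$ if this holds at every point of ${\rm dom}\,\partial h$. *)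

theory Defs
  imports "HOL-Analysis.Analysis"
begin

definition subdiff :: "(real^'n \<Rightarrow> ereal) \<Rightarrow> real^'n \<Rightarrow> (real^'n) set" where
  "subdiff h x = {v. \<bar>h x\<bar> \<noteq> \<infinity> \<and>
      (\<forall>y. h y \<ge> h x + ereal (v \<bullet> (y - x)))}"

definition dom_subdiff :: "(real^'n \<Rightarrow> ereal) \<Rightarrow> (real^'n) set" where
  "dom_subdiff h = {x. subdiff h x \<noteq> {}}"

text \<open>KL property with exponent alpha at xh.  dist(0, empty set) = +infinity,
  so the inequality is taken to hold when the subdifferential is empty.\<close>
definition KL_at :: "(real^'n \<Rightarrow> ereal) \<Rightarrow> real \<Rightarrow> real^'n \<Rightarrow> bool" where
  "KL_at h \<alpha> xh \<longleftrightarrow> xh \<in> dom_subdiff h \<and>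
     (\<exists>a::ereal. a > 0 \<and> (\<exists>V. open V \<and> xh \<in> V \<and> (\<exists>a0::real. a0 > 0 \<and>
        (\<forall>x\<in>V. h xh < h x \<and> h x < h xh + a \<longrightarrow>
           subdiff h x = {} \<or>
           a0 * (1 - \<alpha>) * (real_of_ereal (h x - h xh)) powr (- \<alpha>)
              * infdist 0 (subdiff h x) \<ge> 1))))"

definition KL_function :: "(real^'n \<Rightarrow> ereal) \<Rightarrow> real \<Rightarrow> bool" where
  "KL_function h \<alpha> \<longleftrightarrow> (\<forall>x\<in>dom_subdiff h. KL_at h \<alpha> x)"

text \<open>R^q is represented as the vectors u :: nat => real with u k = 0 for k >= q.\<close>
definition Rq :: "nat \<Rightarrow> (nat \<Rightarrow> real) set" where
  "Rq q = {u. \<forall>k\<ge>q. u k = 0}"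

definition strictly_convex_Rq :: "nat \<Rightarrow> ((nat \<Rightarrow> real) \<Rightarrow> real) \<Rightarrow> bool" where
  "strictly_convex_Rq q l \<longleftrightarrow> (\<forall>u\<in>Rq q. \<forall>v\<in>Rq q. \<forall>t::real. u \<noteq> v \<and> 0 < t \<and> t < 1 \<longrightarrow>
       l (\<lambda>k. t * u k + (1 - t) * v k) < t * l u + (1 - t) * l v)"

definition matvec :: "nat \<Rightarrow> (nat \<Rightarrow> 'n \<Rightarrow> real) \<Rightarrow> real^'n \<Rightarrow> (nat \<Rightarrow> real)" where
  "matvec q M x = (\<lambda>k. if k < q then (\<Sum>j\<in>UNIV. M k j * x $ j) else 0)"

end

theory Submission
  imports Defs
begin

text \<open>Let \<open>L = P\<^sub>1 + \<langle>\<lambda>, g\<rangle>\<close> be the Lagrangian. The multiplier makes \<open>xbar\<close> a global minimiser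
  of the convex function \<open>L\<close>, and the KL inequality for \<open>L\<close> at \<open>xbar\<close> yields, through proximal steps
  that halve \<open>L - L xbar\<close>, a Hoelderian error bound \<open>dist x (Argmin L) \<le> C (L x - L xbar)\<^bsup>1-\<alpha>\<^esup>\<close>
  near \<open>xbar\<close>. Strict convexity of the \<open>l\<^sub>i\<close> fixes \<open>A\<^sub>i x\<close> on \<open>Argmin L\<close> for every active
  constraint, and strict complementarity keeps the inactive constraints negative near \<open>xbar\<close>, so
  nearby minimisers of \<open>L\<close> minimise \<open>F\<close>. As \<open>L \<le> F\<close> on the feasible set, the error bound passes
  to \<open>F\<close>; and for a subgradient \<open>v\<close> of \<open>F\<close> at \<open>x\<close>, the subgradient inequality towards a nearby
  minimiser \<open>z\<close> gives \<open>F x - F xbar \<le> |v| dist x z\<close>, which is the KL inequality for \<open>F\<close>.\<close>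

section \<open>Subgradients and proximal points\<close>

definition is_subgradient :: "('a::real_inner \<Rightarrow> real) \<Rightarrow> 'a \<Rightarrow> 'a \<Rightarrow> bool" where
  "is_subgradient f x w \<longleftrightarrow> (\<forall>y. f x + w \<bullet> (y - x) \<le> f y)"

lemma subdiff_ereal: "subdiff (\<lambda>x. ereal (f x)) x = {w. is_subgradient f x w}"
  unfolding subdiff_def is_subgradient_def by simp

lemma minimizer_in_dom_subdiff:
  assumes "\<bar>h xb\<bar> \<noteq> \<infinity>" and "\<And>x. h xb \<le> h x"
  shows "xb \<in> dom_subdiff h"
proof -
  have "0 \<in> subdiff h xb" using assms by (simp add: subdiff_def)
  then show ?thesis unfolding dom_subdiff_def by blast
qed

lemma proximal_minimizer_exists:
  fixes f :: "'a::euclidean_space \<Rightarrow> real"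
  assumes cont: "continuous_on UNIV f" and nonneg: "\<And>y. 0 \<le> f y" and \<tau>: "0 < \<tau>"
  obtains p where "\<And>y. f p + (norm (p - x))\<^sup>2 / (2 * \<tau>) \<le> f y + (norm (y - x))\<^sup>2 / (2 * \<tau>)"
proof -
  define \<phi> where "\<phi> y = f y + (norm (y - x))\<^sup>2 / (2 * \<tau>)" for y
  define r where "r = sqrt (2 * \<tau> * f x)"
  have r: "0 \<le> r" "r\<^sup>2 = 2 * \<tau> * f x" using nonneg \<tau> by (simp_all add: r_def)
  have "continuous_on (cball x r) \<phi>" unfolding \<phi>_def
    by (intro continuous_intros continuous_on_subset[OF cont]) (use \<tau> in auto)
  then obtain p where p: "p \<in> cball x r" "\<forall>y\<in>cball x r. \<phi> p \<le> \<phi> y"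
    using continuous_attains_inf[OF compact_cball, of x r \<phi>] r by auto
  \<comment> \<open>outside the ball of radius r the quadratic term alone exceeds \<open>\<phi> x = f x\<close>\<close>
  have "\<phi> p \<le> \<phi> y" for y
  proof (cases "y \<in> cball x r")
    case False
    then have "r < norm (y - x)" by (simp add: dist_norm norm_minus_commute)
    then have "r\<^sup>2 < (norm (y - x))\<^sup>2" using r(1) by (simp add: power_strict_mono)
    then have "f x < (norm (y - x))\<^sup>2 / (2 * \<tau>)" using r \<tau> by (simp add: field_simps)
    then have "\<phi> x < \<phi> y" using nonneg[of y] by (simp add: \<phi>_def)
    moreover have "\<phi> p \<le> \<phi> x" using p r by auto
    ultimately show ?thesis by simp
  qed (use p in auto)
  then show ?thesis by (intro that) (simp add: \<phi>_def)
qed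

lemma proximal_minimizer_subgradient:
  fixes f :: "'a::real_inner \<Rightarrow> real"
  assumes cvx: "convex_on UNIV f" and \<tau>: "0 < \<tau>"
    and p_min: "\<And>y. f p + (norm (p - x))\<^sup>2 / (2 * \<tau>) \<le> f y + (norm (y - x))\<^sup>2 / (2 * \<tau>)"
  shows "is_subgradient f p ((1 / \<tau>) *\<^sub>R (x - p))"
  unfolding is_subgradient_def
proof
  fix y
  define I where "I = (p - x) \<bullet> (y - p)"
  define M where "M = (norm (y - p))\<^sup>2"
  define N where "N = (norm (p - x))\<^sup>2"
  \<comment> \<open>compare \<open>p\<close> with the point at step \<open>t\<close> on the segment towards \<open>y\<close>, then let \<open>t \<rightarrow> 0\<close>\<close>
  have step: "0 \<le> f y - f p + I / \<tau> + t * M / (2 * \<tau>)" if t: "0 < t" "t \<le> 1" for t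
  proof -
    have "(1 - t) *\<^sub>R p + t *\<^sub>R y - x = (p - x) + t *\<^sub>R (y - p)" by (simp add: algebra_simps)
    then have "(norm ((1 - t) *\<^sub>R p + t *\<^sub>R y - x))\<^sup>2 = N + 2 * t * I + t\<^sup>2 * M"
      unfolding N_def I_def M_def power2_norm_eq_inner
      by (simp add: inner_add_left inner_add_right inner_commute power2_eq_square algebra_simps)
    moreover have "f ((1 - t) *\<^sub>R p + t *\<^sub>R y) \<le> (1 - t) * f p + t * f y"
      using convex_onD[OF cvx, of t p y] t by auto
    ultimately have "f p + N / (2 * \<tau>) \<le> (1 - t) * f p + t * f y + (N + 2 * t * I + t\<^sup>2 * M) / (2 * \<tau>)"
      using p_min[of "(1 - t) *\<^sub>R p + t *\<^sub>R y"] by (simp add: N_def)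
    then have "0 \<le> t * (f y - f p) + (2 * t * I + t\<^sup>2 * M) / (2 * \<tau>)"
      by (simp add: add_divide_distrib algebra_simps)
    also have "\<dots> = t * (f y - f p + I / \<tau> + t * M / (2 * \<tau>))"
      using \<tau> by (simp add: field_simps power2_eq_square)
    finally show ?thesis using t by (simp add: zero_le_mult_iff)
  qed
  have "- (f y - f p + I / \<tau>) \<le> 0"
  proof (rule field_le_epsilon)
    fix e :: real assume e: "0 < e"
    define t where "t = min 1 (e * (2 * \<tau>) / (M + 1))"
    have M: "0 \<le> M" by (simp add: M_def)
    have t: "0 < t" "t \<le> 1" using e \<tau> M by (auto simp: t_def)
    have "t * M \<le> e * (2 * \<tau>) / (M + 1) * M"
      using M by (intro mult_right_mono) (auto simp: t_def)
    also have "\<dots> \<le> e * (2 * \<tau>)" using M e \<tau> by (simp add: field_simps)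
    finally have "t * M / (2 * \<tau>) \<le> e" using \<tau> by (simp add: field_simps)
    then show "- (f y - f p + I / \<tau>) \<le> 0 + e" using step[OF t] by linarith
  qed
  moreover have "((1 / \<tau>) *\<^sub>R (x - p)) \<bullet> (y - p) = - I / \<tau>"
    by (simp add: I_def inner_diff_left inner_diff_right divide_simps algebra_simps)
  ultimately show "f p + ((1 / \<tau>) *\<^sub>R (x - p)) \<bullet> (y - p) \<le> f y" by simp
qed

section \<open>From the KL inequality to a Hoelderian error bound\<close>

definition local_KL_bound :: "('a::real_inner \<Rightarrow> real) \<Rightarrow> real \<Rightarrow> real \<Rightarrow> 'a \<Rightarrow> real \<Rightarrow> real \<Rightarrow> bool" where
  "local_KL_bound f \<alpha> c xb \<delta> a \<longleftrightarrow>
     (\<forall>p w. dist p xb < \<delta> \<longrightarrow> 0 < f p \<longrightarrow> f p < a \<longrightarrow> is_subgradient f p w \<longrightarrow> c * f p powr \<alpha> \<le> norm w)"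

lemma KL_proximal_halving:
  fixes f :: "'a::euclidean_space \<Rightarrow> real"
  assumes cvx: "convex_on UNIV f" and cont: "continuous_on UNIV f" and nonneg: "\<And>y. 0 \<le> f y"
    and \<alpha>: "0 < \<alpha>" "\<alpha> < 1" and c: "0 < c" and KL: "local_KL_bound f \<alpha> c xb \<delta> a"
  obtains K where "0 < K"
    and "\<And>y. 0 < f y \<Longrightarrow> f y < a \<Longrightarrow> dist y xb + K * f y powr (1 - \<alpha>) < \<delta> \<Longrightarrow>
           \<exists>p. f p \<le> f y / 2 \<and> dist y p \<le> K * f y powr (1 - \<alpha>)"
proof
  define K where "K = sqrt 8 / c"
  show "0 < K" using c by (simp add: K_def)
  fix y assume y: "0 < f y" "f y < a" "dist y xb + K * f y powr (1 - \<alpha>) < \<delta>"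
  define s where "s = f y"
  define u where "u = s powr (1 - \<alpha>)"
  \<comment> \<open>with this step, moving by \<open>K u\<close> costs \<open>s\<close> in the proximal objective and moving by \<open>2 u / c\<close>
     costs \<open>s / 2\<close>; the KL bound forces the latter whenever \<open>f\<close> does not halve\<close>
  define \<tau> where "\<tau> = 4 * u\<^sup>2 / (c\<^sup>2 * s)"
  have s: "0 < s" and u: "0 < u" using y by (simp_all add: s_def u_def)
  have \<tau>: "0 < \<tau>" using s u c by (simp add: \<tau>_def)
  obtain p where p_min: "\<And>z. f p + (norm (p - y))\<^sup>2 / (2 * \<tau>) \<le> f z + (norm (z - y))\<^sup>2 / (2 * \<tau>)"
    using proximal_minimizer_exists[OF cont nonneg \<tau>] by blast
  have p_le: "f p + (norm (p - y))\<^sup>2 / (2 * \<tau>) \<le> f y" using p_min[of y] by simp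
  have p_sub: "is_subgradient f p ((1 / \<tau>) *\<^sub>R (y - p))"
    using cvx \<tau> p_min by (rule proximal_minimizer_subgradient)
  have "(norm (p - y))\<^sup>2 / (2 * \<tau>) \<le> s" using p_le nonneg[of p] by (simp add: s_def)
  then have "(norm (p - y))\<^sup>2 \<le> 2 * \<tau> * s" using \<tau> by (simp add: field_simps)
  also have "\<dots> = (K * u)\<^sup>2"
  proof -
    have "(K * u)\<^sup>2 = 8 * u\<^sup>2 / c\<^sup>2" by (simp add: K_def power_mult_distrib power_divide)
    then show ?thesis using s c by (simp add: \<tau>_def)
  qed
  finally have "norm (p - y) \<le> K * u"
    by (rule power2_le_imp_le) (use u \<open>0 < K\<close> in simp)
  then have dist_yp: "dist y p \<le> K * u" by (simp add: dist_norm norm_minus_commute)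
  have "f p \<le> s / 2"
  proof (rule ccontr)
    assume "\<not> f p \<le> s / 2"
    then have fp: "s / 2 < f p" by simp
    have "dist p xb \<le> dist y xb + dist y p" by (metis dist_commute dist_triangle)
    then have "dist p xb < \<delta>" using dist_yp y(3) by (simp add: u_def s_def)
    moreover have "f p < a" using p_le y(2) \<tau> by (smt (verit) divide_nonneg_pos zero_le_power2)
    moreover have "0 < f p" using fp s by linarith
    ultimately have "c * f p powr \<alpha> \<le> norm ((1 / \<tau>) *\<^sub>R (y - p))"
      using KL p_sub unfolding local_KL_bound_def by blast
    also have "\<dots> = norm (p - y) / \<tau>" using \<tau> by (simp add: norm_minus_commute)
    finally have KL_p: "c * f p powr \<alpha> * \<tau> \<le> norm (p - y)" using \<tau> by (simp add: field_simps)
    have "s powr \<alpha> / 2 \<le> s powr \<alpha> / 2 powr \<alpha>"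
      using \<alpha> powr_mono[of \<alpha> 1 2] by (intro divide_left_mono) auto
    also have "\<dots> = (s / 2) powr \<alpha>" using s by (simp add: powr_divide)
    also have "\<dots> \<le> f p powr \<alpha>" using fp s \<alpha> by (intro powr_mono2) auto
    finally have "c * (s powr \<alpha> / 2) * \<tau> \<le> c * f p powr \<alpha> * \<tau>"
      using c \<tau> by (simp add: mult_right_mono)
    moreover have "c * (s powr \<alpha> / 2) * \<tau> = 2 * u / c"
    proof -
      have "c * (s powr \<alpha> / 2) * \<tau> = 2 * u * (s powr \<alpha> * u) / (c * s)"
        using c by (simp add: \<tau>_def power2_eq_square)
      also have "s powr \<alpha> * u = s" using s by (simp add: u_def flip: powr_add)
      finally show ?thesis using s c by simp
    qed
    ultimately have "2 * u / c \<le> norm (p - y)" using KL_p by linarith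
    then have "(2 * u / c)\<^sup>2 / (2 * \<tau>) \<le> (norm (p - y))\<^sup>2 / (2 * \<tau>)"
      using u c \<tau> by (intro divide_right_mono power_mono) auto
    moreover have "(2 * u / c)\<^sup>2 / (2 * \<tau>) = s / 2"
      using s u c by (simp add: \<tau>_def power2_eq_square field_simps)
    ultimately show False using p_le fp by (simp add: s_def)
  qed
  then show "\<exists>p. f p \<le> f y / 2 \<and> dist y p \<le> K * f y powr (1 - \<alpha>)"
    using dist_yp by (auto simp: s_def u_def)
qed

lemma halving_iterates:
  fixes f :: "'a::metric_space \<Rightarrow> real"
  assumes nonneg: "\<And>y. 0 \<le> f y" and \<beta>: "0 < \<beta>" and K: "0 < K"
    and halving: "\<And>y. 0 < f y \<Longrightarrow> f y < a \<Longrightarrow> dist y xb + K * f y powr \<beta> < \<delta> \<Longrightarrow>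
                    \<exists>p. f p \<le> f y / 2 \<and> dist y p \<le> K * f y powr \<beta>"
    and r_def: "r = (1 / 2) powr \<beta>"
    and x: "f x < a" "dist x xb + K / (1 - r) * f x powr \<beta> < \<delta>"
  shows "\<exists>y. f y \<le> f x \<and> f y powr \<beta> \<le> f x powr \<beta> * r ^ k
           \<and> dist x y \<le> K * f x powr \<beta> * ((1 - r ^ k) / (1 - r))"
proof (induction k)
  case 0
  show ?case by (rule exI[of _ x]) simp
next
  case (Suc k)
  define T where "T = f x powr \<beta>"
  have r: "0 < r" "r < 1" using \<beta> powr_less_mono2[of \<beta> "1 / 2" 1] by (simp_all add: r_def)
  have T: "0 \<le> T" by (simp add: T_def)
  have partial_sum_le: "(1 - r ^ j) / (1 - r) \<le> 1 / (1 - r)" for j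
    using r by (simp add: divide_right_mono)
  obtain y where y_le: "f y \<le> f x" and y_pow: "f y powr \<beta> \<le> T * r ^ k"
    and y_dist: "dist x y \<le> K * T * ((1 - r ^ k) / (1 - r))"
    using Suc.IH by (auto simp: T_def)
  have dist_next: "K * T * ((1 - r ^ k) / (1 - r)) + K * (T * r ^ k) = K * T * ((1 - r ^ Suc k) / (1 - r))"
    using r by (simp add: field_simps)
  show ?case
  proof (cases "f y = 0")
    case True
    have "0 \<le> K * (T * r ^ k)" using K T r by simp
    then have "K * T * ((1 - r ^ k) / (1 - r)) \<le> K * T * ((1 - r ^ Suc k) / (1 - r))"
      using dist_next by linarith
    then show ?thesis using True y_le y_dist T r \<beta> by (intro exI[of _ y]) (auto simp: T_def)
  next
    case False
    then have "0 < f y" using nonneg[of y] by simp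
    moreover have "f y < a" using y_le x(1) by simp
    moreover have "dist y xb + K * f y powr \<beta> < \<delta>"
    proof -
      have "dist y xb + K * f y powr \<beta> \<le> dist x xb + dist x y + K * (T * r ^ k)"
        using dist_triangle[of y xb x] y_pow K by (simp add: dist_commute mult_left_mono add_mono)
      also have "\<dots> \<le> dist x xb + K * T * ((1 - r ^ Suc k) / (1 - r))"
        using y_dist dist_next by linarith
      also have "\<dots> \<le> dist x xb + K * T * (1 / (1 - r))"
        using mult_left_mono[OF partial_sum_le[of "Suc k"], of "K * T"] K T by simp
      also have "\<dots> < \<delta>" using x(2) by (simp add: T_def)
      finally show ?thesis .
    qed
    ultimately obtain p where p_le: "f p \<le> f y / 2" and p_dist: "dist y p \<le> K * f y powr \<beta>"
      using halving by blast
    have "f p powr \<beta> \<le> (f y / 2) powr \<beta>" using p_le nonneg \<beta> by (intro powr_mono2) auto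
    also have "\<dots> = f y powr \<beta> * r" by (simp add: r_def powr_divide powr_mult flip: powr_mult)
    also have "\<dots> \<le> T * r ^ Suc k" using y_pow r by (simp add: mult_right_mono mult.commute)
    finally have "f p powr \<beta> \<le> T * r ^ Suc k" .
    moreover have "dist x p \<le> K * T * ((1 - r ^ Suc k) / (1 - r))"
    proof -
      have "dist x p \<le> dist x y + dist y p" by (rule dist_triangle)
      also have "\<dots> \<le> K * T * ((1 - r ^ k) / (1 - r)) + K * (T * r ^ k)"
        using y_dist p_dist y_pow K by (smt (verit) mult_left_mono)
      finally show ?thesis using dist_next by simp
    qed
    moreover have "f p \<le> f x" using p_le y_le \<open>0 < f y\<close> by simp
    ultimately show ?thesis by (auto simp: T_def)
  qed
qed

lemma halving_error_bound:
  fixes f :: "'a::heine_borel \<Rightarrow> real"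
  assumes cont: "continuous_on UNIV f" and nonneg: "\<And>y. 0 \<le> f y" and \<beta>: "0 < \<beta>" and K: "0 < K"
    and halving: "\<And>y. 0 < f y \<Longrightarrow> f y < a \<Longrightarrow> dist y xb + K * f y powr \<beta> < \<delta> \<Longrightarrow>
                    \<exists>p. f p \<le> f y / 2 \<and> dist y p \<le> K * f y powr \<beta>"
  obtains C where "0 < C"
    and "\<And>x. f x < a \<Longrightarrow> dist x xb + C * f x powr \<beta> < \<delta> \<Longrightarrow>
           \<exists>z. f z = 0 \<and> dist x z \<le> C * f x powr \<beta>"
proof
  define r :: real where "r = (1 / 2) powr \<beta>"
  have r: "0 < r" "r < 1" using \<beta> powr_less_mono2[of \<beta> "1 / 2" 1] by (simp_all add: r_def)
  show "0 < K / (1 - r)" using K r by simp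
  fix x assume x: "f x < a" "dist x xb + K / (1 - r) * f x powr \<beta> < \<delta>"
  define R where "R = K / (1 - r) * f x powr \<beta>"
  have "continuous_on (cball x R) f" using cont by (rule continuous_on_subset) simp
  moreover have "0 \<le> R" using K r by (simp add: R_def)
  ultimately obtain z where z_ball: "z \<in> cball x R" and z_min: "\<forall>y\<in>cball x R. f z \<le> f y"
    using continuous_attains_inf[OF compact_cball, of x R f] by auto
  have "f z powr \<beta> \<le> f x powr \<beta> * r ^ k" for k
  proof -
    obtain y where y_pow: "f y powr \<beta> \<le> f x powr \<beta> * r ^ k"
      and y_dist: "dist x y \<le> K * f x powr \<beta> * ((1 - r ^ k) / (1 - r))"
      using halving_iterates[OF nonneg \<beta> K halving r_def x] by blast
    have "(1 - r ^ k) / (1 - r) \<le> 1 / (1 - r)" using r by (simp add: divide_right_mono)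
    then have "K * f x powr \<beta> * ((1 - r ^ k) / (1 - r)) \<le> K * f x powr \<beta> * (1 / (1 - r))"
      using K by (intro mult_left_mono) auto
    then have "K * f x powr \<beta> * ((1 - r ^ k) / (1 - r)) \<le> R" by (simp add: R_def)
    then have "f z \<le> f y" using z_min y_dist by simp
    then have "f z powr \<beta> \<le> f y powr \<beta>" using nonneg \<beta> by (intro powr_mono2) auto
    then show ?thesis using y_pow by simp
  qed
  moreover have "(\<lambda>k. f x powr \<beta> * r ^ k) \<longlonglongrightarrow> 0"
    using r by (intro tendsto_mult_right_zero LIMSEQ_power_zero) simp
  ultimately have "f z powr \<beta> \<le> 0" by (intro LIMSEQ_le_const) auto
  then have "f z = 0" using nonneg[of z] by (metis powr_gt_zero not_le)
  with z_ball show "\<exists>z. f z = 0 \<and> dist x z \<le> K / (1 - r) * f x powr \<beta>"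
    by (auto simp: R_def)
qed

lemma KL_error_bound:
  fixes f :: "'a::euclidean_space \<Rightarrow> real"
  assumes cvx: "convex_on UNIV f" and cont: "continuous_on UNIV f" and nonneg: "\<And>y. 0 \<le> f y"
    and \<alpha>: "0 < \<alpha>" "\<alpha> < 1" and c: "0 < c" and KL: "local_KL_bound f \<alpha> c xb \<delta> a"
    and \<delta>: "0 < \<delta>" and a: "0 < a"
  obtains C where "0 < C"
    and "\<And>\<epsilon>. 0 < \<epsilon> \<Longrightarrow> \<exists>\<rho>>0. \<exists>b>0. \<forall>x. dist x xb < \<rho> \<longrightarrow> f x < b \<longrightarrow>
           (\<exists>z. f z = 0 \<and> dist x z \<le> C * f x powr (1 - \<alpha>) \<and> dist z xb < \<epsilon>)"
proof -
  obtain K where K: "0 < K"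
    and halving: "\<And>y. 0 < f y \<Longrightarrow> f y < a \<Longrightarrow> dist y xb + K * f y powr (1 - \<alpha>) < \<delta> \<Longrightarrow>
                    \<exists>p. f p \<le> f y / 2 \<and> dist y p \<le> K * f y powr (1 - \<alpha>)"
    using KL_proximal_halving[OF cvx cont nonneg \<alpha> c KL] by blast
  obtain C where C: "0 < C"
    and bound: "\<And>x. f x < a \<Longrightarrow> dist x xb + C * f x powr (1 - \<alpha>) < \<delta> \<Longrightarrow>
                  \<exists>z. f z = 0 \<and> dist x z \<le> C * f x powr (1 - \<alpha>)"
    using halving_error_bound[where a = a and xb = xb and \<delta> = \<delta>, OF cont nonneg _ K halving] \<alpha> by auto
  have "\<exists>\<rho>>0. \<exists>b>0. \<forall>x. dist x xb < \<rho> \<longrightarrow> f x < b \<longrightarrow>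
          (\<exists>z. f z = 0 \<and> dist x z \<le> C * f x powr (1 - \<alpha>) \<and> dist z xb < \<epsilon>)" if \<epsilon>: "0 < \<epsilon>" for \<epsilon>
  proof -
    define \<eta> where "\<eta> = min \<delta> \<epsilon>"
    define b where "b = min a ((\<eta> / (2 * C)) powr (1 / (1 - \<alpha>)))"
    have \<eta>: "0 < \<eta>" using \<delta> \<epsilon> by (simp add: \<eta>_def)
    have "\<exists>z. f z = 0 \<and> dist x z \<le> C * f x powr (1 - \<alpha>) \<and> dist z xb < \<epsilon>"
      if x: "dist x xb < \<eta> / 2" "f x < b" for x
    proof -
      have "f x powr (1 - \<alpha>) < ((\<eta> / (2 * C)) powr (1 / (1 - \<alpha>))) powr (1 - \<alpha>)"
        using x(2) nonneg[of x] \<alpha> by (intro powr_less_mono2) (auto simp: b_def)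
      also have "\<dots> = \<eta> / (2 * C)" using \<eta> C \<alpha> by (simp add: powr_powr)
      finally have close: "C * f x powr (1 - \<alpha>) < \<eta> / 2" using C by (simp add: field_simps)
      then obtain z where "f z = 0" "dist x z \<le> C * f x powr (1 - \<alpha>)"
        using bound[of x] x by (auto simp: \<eta>_def b_def)
      moreover have "dist z xb \<le> dist x z + dist x xb" by (metis dist_commute dist_triangle)
      ultimately show ?thesis using x(1) close by (intro exI[of _ z]) (auto simp: \<eta>_def)
    qed
    moreover have "0 < b" using \<eta> C a by (simp add: b_def)
    ultimately show ?thesis using \<eta> by (metis half_gt_zero)
  qed
  then show ?thesis using C that by blast
qed

lemma KL_at_imp_local_KL_bound:
  fixes L :: "real^'n \<Rightarrow> real"
  assumes KL: "KL_at (\<lambda>x. ereal (L x)) \<alpha> xb" and \<alpha>: "\<alpha> < 1"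
  obtains \<delta> a c where "0 < \<delta>" "0 < a" "0 < c" "local_KL_bound (\<lambda>x. L x - L xb) \<alpha> c xb \<delta> a"
proof -
  obtain a' V a0 where a': "0 < a'" and V: "open V" "xb \<in> V" and a0: "0 < a0"
    and KL_V: "\<forall>x\<in>V. L xb < L x \<and> ereal (L x) < ereal (L xb) + a' \<longrightarrow>
           subdiff (\<lambda>x. ereal (L x)) x = {} \<or>
           1 \<le> a0 * (1 - \<alpha>) * (real_of_ereal (ereal (L x) - ereal (L xb))) powr (- \<alpha>)
                 * infdist 0 (subdiff (\<lambda>x. ereal (L x)) x)"
    using KL unfolding KL_at_def by auto
  obtain \<delta> where \<delta>: "0 < \<delta>" "ball xb \<delta> \<subseteq> V" using V open_contains_ball by blast
  \<comment> \<open>a finite level below \<open>a'\<close>, which may be \<open>\<infinity>\<close>\<close>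
  define a where "a = (if a' = \<infinity> then 1 else real_of_ereal a')"
  have a: "0 < a \<and> ereal a \<le> a'" using a' by (cases a') (auto simp: a_def)
  define c where "c = 1 / (a0 * (1 - \<alpha>))"
  have "c * (L p - L xb) powr \<alpha> \<le> norm w"
    if p: "dist p xb < \<delta>" "0 < L p - L xb" "L p - L xb < a" and w: "is_subgradient (\<lambda>x. L x - L xb) p w"
    for p w
  proof -
    have "p \<in> V" using p(1) \<delta>(2) by (auto simp: dist_commute)
    moreover have "ereal (L p) < ereal (L xb) + a'"
    proof -
      have "ereal (L p) < ereal (L xb) + ereal a" using p(3) by simp
      also have "\<dots> \<le> ereal (L xb) + a'" using a by (simp add: add_left_mono del: plus_ereal.simps)
      finally show ?thesis .
    qed
    moreover have w_sub: "w \<in> subdiff (\<lambda>x. ereal (L x)) p"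
      using w by (simp add: subdiff_ereal is_subgradient_def)
    ultimately have "1 \<le> a0 * (1 - \<alpha>) * (L p - L xb) powr (- \<alpha>) * infdist 0 (subdiff (\<lambda>x. ereal (L x)) p)"
      using KL_V p(2) by auto
    also have "\<dots> \<le> a0 * (1 - \<alpha>) * (L p - L xb) powr (- \<alpha>) * norm w"
      using infdist_le[OF w_sub, of 0] a0 \<alpha> by (intro mult_left_mono) auto
    finally have "(L p - L xb) powr \<alpha> \<le> a0 * (1 - \<alpha>) * norm w"
      using p(2) by (simp add: powr_minus divide_simps mult_ac)
    then show ?thesis using a0 \<alpha> by (simp add: c_def field_simps)
  qed
  moreover have "0 < c" using a0 \<alpha> by (simp add: c_def)
  ultimately show ?thesis using that \<delta>(1) a unfolding local_KL_bound_def by blast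
qed

lemma KL_error_bound_at_minimizer:
  fixes L :: "real^'n \<Rightarrow> real"
  assumes cvx: "convex_on UNIV L" and L_min: "\<And>x. L xb \<le> L x"
    and KL: "KL_at (\<lambda>x. ereal (L x)) \<alpha> xb" and \<alpha>: "0 < \<alpha>" "\<alpha> < 1"
  obtains C where "0 < C"
    and "\<And>\<epsilon>. 0 < \<epsilon> \<Longrightarrow> \<exists>\<rho>>0. \<exists>b>0. \<forall>x. dist x xb < \<rho> \<longrightarrow> L x - L xb < b \<longrightarrow>
           (\<exists>z. L z = L xb \<and> dist x z \<le> C * (L x - L xb) powr (1 - \<alpha>) \<and> dist z xb < \<epsilon>)"
proof -
  have f_convex: "convex_on UNIV (\<lambda>x. L x - L xb)"
    using cvx by (intro convex_on_diff) (simp_all add: concave_on_const)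
  have f_cont: "continuous_on UNIV (\<lambda>x. L x - L xb)"
    using convex_on_continuous[OF open_UNIV cvx] by (intro continuous_intros)
  have f_nonneg: "0 \<le> L x - L xb" for x using L_min[of x] by simp
  obtain \<delta> a c where "0 < \<delta>" "0 < a" "0 < c" "local_KL_bound (\<lambda>x. L x - L xb) \<alpha> c xb \<delta> a"
    using KL \<alpha>(2) by (rule KL_at_imp_local_KL_bound)
  then obtain C where "0 < C" and "\<And>\<epsilon>. 0 < \<epsilon> \<Longrightarrow> \<exists>\<rho>>0. \<exists>b>0. \<forall>x. dist x xb < \<rho> \<longrightarrow> L x - L xb < b \<longrightarrow>
           (\<exists>z. L z - L xb = 0 \<and> dist x z \<le> C * (L x - L xb) powr (1 - \<alpha>) \<and> dist z xb < \<epsilon>)"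
    using KL_error_bound[OF f_convex f_cont f_nonneg \<alpha>] by blast
  then show ?thesis using that by simp
qed

section \<open>Convexity of the constraint functions\<close>

lemma convex_on_sum_fun:
  assumes "finite I" "convex S" "\<And>i. i \<in> I \<Longrightarrow> convex_on S (f i)"
  shows "convex_on S (\<lambda>x. \<Sum>i\<in>I. f i x)"
  using assms by (induction I rule: finite_induct) (auto simp: convex_on_const)

lemma matvec_convex_comb:
  "matvec q M ((1 - t) *\<^sub>R x + t *\<^sub>R y) = (\<lambda>k. t * matvec q M y k + (1 - t) * matvec q M x k)"
proof -
  have "(\<Sum>j\<in>UNIV. M k j * ((1 - t) *\<^sub>R x + t *\<^sub>R y) $ j)
      = (\<Sum>j\<in>UNIV. t * (M k j * y $ j) + (1 - t) * (M k j * x $ j))" for k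
    by (rule sum.cong) (auto simp: algebra_simps)
  then show ?thesis by (auto simp: matvec_def fun_eq_iff sum.distrib sum_distrib_left)
qed

lemma matvec_in_Rq: "matvec q M x \<in> Rq q"
  unfolding matvec_def Rq_def by auto

lemma strictly_convex_RqD_le:
  assumes "strictly_convex_Rq q l" "u \<in> Rq q" "v \<in> Rq q" "0 < t" "t < 1"
  shows "l (\<lambda>k. t * u k + (1 - t) * v k) \<le> t * l u + (1 - t) * l v"
proof (cases "u = v")
  case True
  then show ?thesis by (simp add: algebra_simps)
qed (use assms in \<open>auto simp: strictly_convex_Rq_def intro: less_imp_le\<close>)

lemma convex_on_comp_matvec:
  assumes "strictly_convex_Rq q l"
  shows "convex_on UNIV (\<lambda>x. l (matvec q M x))"
proof (rule convex_onI)
  fix t :: real and x y assume "0 < t" "t < 1"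
  then show "l (matvec q M ((1 - t) *\<^sub>R x + t *\<^sub>R y)) \<le> (1 - t) * l (matvec q M x) + t * l (matvec q M y)"
    unfolding matvec_convex_comb
    using strictly_convex_RqD_le[OF assms matvec_in_Rq[of q M y] matvec_in_Rq[of q M x]]
    by (simp add: algebra_simps)
qed simp

lemma convex_on_weighted_sum_comp_matvec:
  assumes "finite I" "\<And>i. i \<in> I \<Longrightarrow> 0 \<le> lam i" "\<And>i. i \<in> I \<Longrightarrow> strictly_convex_Rq (q i) (l i)"
  shows "convex_on UNIV (\<lambda>x. \<Sum>i\<in>I. lam i * l i (matvec (q i) (A i) x))"
  using assms by (intro convex_on_sum_fun convex_on_cmul convex_on_comp_matvec) auto

lemma minimizers_same_image:
  fixes \<psi> :: "real^'n \<Rightarrow> real"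
  assumes \<psi>: "convex_on UNIV \<psi>" and l: "strictly_convex_Rq q l" and \<mu>: "0 < \<mu>"
    and x_min: "\<And>y. \<psi> x + \<mu> * l (matvec q M x) \<le> \<psi> y + \<mu> * l (matvec q M y)"
    and z_eq: "\<psi> z + \<mu> * l (matvec q M z) = \<psi> x + \<mu> * l (matvec q M x)"
  shows "matvec q M z = matvec q M x"
proof (rule ccontr)
  assume ne: "matvec q M z \<noteq> matvec q M x"
  define mid where "mid = (1 - 1 / 2) *\<^sub>R x + (1 / 2 :: real) *\<^sub>R z"
  have "\<psi> mid \<le> (1 - 1 / 2) * \<psi> x + 1 / 2 * \<psi> z"
    unfolding mid_def using convex_onD[OF \<psi>, of "1 / 2" x z] by simp
  moreover have "l (matvec q M mid) < 1 / 2 * l (matvec q M z) + (1 - 1 / 2) * l (matvec q M x)"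
    using l[unfolded strictly_convex_Rq_def, rule_format, OF matvec_in_Rq[of q M z] matvec_in_Rq[of q M x], where t = "1 / 2"] ne
    unfolding mid_def matvec_convex_comb by simp
  then have "\<mu> * l (matvec q M mid) < \<mu> * (1 / 2 * l (matvec q M z) + (1 - 1 / 2) * l (matvec q M x))"
    using \<mu> by (rule mult_strict_left_mono)
  ultimately have "\<psi> mid + \<mu> * l (matvec q M mid) < \<psi> x + \<mu> * l (matvec q M x)"
    using z_eq by (simp add: algebra_simps)
  then show False using x_min[of mid] by simp
qed

lemma lagrangian_minimizers_same_active_image:
  fixes P1 :: "real^'n \<Rightarrow> real" and m :: nat and lam :: "nat \<Rightarrow> real"
    and l :: "nat \<Rightarrow> (nat \<Rightarrow> real) \<Rightarrow> real" and q :: "nat \<Rightarrow> nat" and A :: "nat \<Rightarrow> nat \<Rightarrow> 'n \<Rightarrow> real"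
  defines "L y \<equiv> P1 y + (\<Sum>j<m. lam j * l j (matvec (q j) (A j) y))"
  assumes P1: "convex_on UNIV P1" and l: "\<forall>j<m. strictly_convex_Rq (q j) (l j)"
    and lam: "\<forall>j<m. 0 \<le> lam j" and i: "i < m" "0 < lam i"
    and x_min: "\<And>y. L x \<le> L y" and z_eq: "L z = L x"
  shows "matvec (q i) (A i) z = matvec (q i) (A i) x"
proof -
  define \<psi> where "\<psi> y = P1 y + (\<Sum>j\<in>{..<m} - {i}. lam j * l j (matvec (q j) (A j) y))" for y
  have L_split: "L y = \<psi> y + lam i * l i (matvec (q i) (A i) y)" for y
    using i by (simp add: L_def \<psi>_def sum.remove[of "{..<m}" i])
  have "convex_on UNIV \<psi>"
    unfolding \<psi>_def using P1 l lam by (intro convex_on_add convex_on_weighted_sum_comp_matvec) auto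
  moreover have "strictly_convex_Rq (q i) (l i)" using l i by blast
  ultimately show ?thesis
    using i(2) x_min z_eq unfolding L_split by (rule minimizers_same_image)
qed

section \<open>Transfer to the constrained problem\<close>

lemma KL_at_of_error_bound:
  fixes F :: "real^'n \<Rightarrow> ereal"
  assumes dom: "xb \<in> dom_subdiff F" and \<alpha>: "\<alpha> < 1" and C: "0 < C" and \<rho>: "0 < \<rho>" and a: "0 < a"
    and bound: "\<And>x. dist x xb < \<rho> \<Longrightarrow> F xb < F x \<Longrightarrow> F x < F xb + ereal a \<Longrightarrow>
                  \<exists>z. F z \<le> F xb \<and> dist x z \<le> C * real_of_ereal (F x - F xb) powr (1 - \<alpha>)"
  shows "KL_at F \<alpha> xb"
proof -
  obtain Fb where Fb: "F xb = ereal Fb"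
    using dom by (cases "F xb") (auto simp: dom_subdiff_def subdiff_def)
  have "subdiff F x = {} \<or>
          C / (1 - \<alpha>) * (1 - \<alpha>) * real_of_ereal (F x - F xb) powr (- \<alpha>) * infdist 0 (subdiff F x) \<ge> 1"
    if x: "dist x xb < \<rho>" "F xb < F x" "F x < F xb + ereal a" for x
  proof (cases "subdiff F x = {}")
    case sub: False
    obtain Fx where Fx: "F x = ereal Fx" using x(2,3) Fb by (cases "F x") auto
    define T where "T = Fx - Fb"
    have T: "0 < T" using x(2) Fx Fb by (simp add: T_def)
    obtain z where z: "F z \<le> F xb" "dist x z \<le> C * T powr (1 - \<alpha>)"
      using bound[OF x] Fx Fb by (auto simp: T_def)
    have "T powr \<alpha> / C \<le> norm v" if v: "v \<in> subdiff F x" for v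
    proof -
      have "F x + ereal (v \<bullet> (z - x)) \<le> F z" using v by (simp add: subdiff_def)
      then have "F x + ereal (v \<bullet> (z - x)) \<le> F xb" using z(1) by (rule order_trans)
      then have "T \<le> v \<bullet> (x - z)" using Fx Fb by (simp add: T_def inner_diff_right)
      also have "\<dots> \<le> norm v * dist x z" by (simp add: dist_norm norm_cauchy_schwarz)
      also have "\<dots> \<le> norm v * (C * T powr (1 - \<alpha>))" using z(2) by (simp add: mult_left_mono)
      finally have "T powr \<alpha> * T powr (1 - \<alpha>) \<le> (norm v * C) * T powr (1 - \<alpha>)"
        using T by (simp add: mult_ac flip: powr_add)
      then show ?thesis using T C by (simp add: divide_simps mult_ac)
    qed
    then have "T powr \<alpha> / C \<le> infdist 0 (subdiff F x)"
      unfolding infdist_def using sub by (auto intro!: cINF_greatest)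
    then have "C * T powr (- \<alpha>) * (T powr \<alpha> / C) \<le> C * T powr (- \<alpha>) * infdist 0 (subdiff F x)"
      using C by (intro mult_left_mono) auto
    moreover have "C * T powr (- \<alpha>) * (T powr \<alpha> / C) = 1" using C T by (simp add: powr_minus)
    ultimately show ?thesis
      using \<alpha> Fx Fb by (simp add: T_def)
  qed simp
  then show ?thesis
    unfolding KL_at_def using dom \<rho> a C \<alpha>
    by (intro conjI exI[of _ "ereal a"] exI[of _ "ball xb \<rho>"] exI[of _ "C / (1 - \<alpha>)"])
       (auto simp: dist_commute)
qed

lemma lagrange_multiplier_minimizes_lagrangian:
  fixes g :: "'a \<Rightarrow> nat \<Rightarrow> real" and F :: "'a \<Rightarrow> ereal"
  assumes F_def: "\<And>x. F x = (if \<forall>i<m. g x i \<le> 0 then ereal (P1 x) else \<infinity>)"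
    and feasible: "\<exists>x. \<forall>i<m. g x i \<le> 0" and argmin: "\<forall>x. F xb \<le> F x"
    and lam: "\<forall>i<m. 0 \<le> lam i"
    and lagrange: "(INF x. ereal (P1 x + (\<Sum>i<m. lam i * g x i))) = (INF x. F x)"
  shows lagrange_minimizer_feasible: "\<forall>i<m. g xb i \<le> 0"
    and lagrange_compl_slackness: "P1 xb + (\<Sum>i<m. lam i * g xb i) = P1 xb"
    and lagrange_lagrangian_lower_bound: "P1 xb \<le> P1 x + (\<Sum>i<m. lam i * g x i)"
proof -
  obtain x0 where x0: "\<forall>i<m. g x0 i \<le> 0" using feasible by blast
  show xb_feas: "\<forall>i<m. g xb i \<le> 0"
  proof (rule ccontr)
    assume "\<not> ?thesis"
    then have "F xb = \<infinity>" using F_def by simp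
    then show False using argmin[rule_format, of x0] x0 F_def[of x0] by simp
  qed
  have "(INF x. F x) = F xb" by (rule antisym) (auto intro: INF_lower INF_greatest simp: argmin)
  moreover have "F xb = ereal (P1 xb)" using F_def xb_feas by simp
  ultimately have INF_lagrangian: "(INF x. ereal (P1 x + (\<Sum>i<m. lam i * g x i))) = ereal (P1 xb)"
    using lagrange by (simp only:)
  show lower: "P1 xb \<le> P1 x + (\<Sum>i<m. lam i * g x i)" for x
  proof -
    have "(INF x. ereal (P1 x + (\<Sum>i<m. lam i * g x i))) \<le> ereal (P1 x + (\<Sum>i<m. lam i * g x i))"
      by (rule INF_lower) simp
    then show ?thesis unfolding INF_lagrangian by simp
  qed
  have "(\<Sum>i<m. lam i * g xb i) \<le> 0"
    using xb_feas lam by (intro sum_nonpos) (simp add: mult_nonneg_nonpos)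
  then show "P1 xb + (\<Sum>i<m. lam i * g xb i) = P1 xb" using lower[of xb] by simp
qed

lemma lagrangian_minimizers_near_solution:
  fixes P1 :: "real^'n \<Rightarrow> real" and m :: nat and lam :: "nat \<Rightarrow> real" and g :: "real^'n \<Rightarrow> nat \<Rightarrow> real"
  defines "L y \<equiv> P1 y + (\<Sum>i<m. lam i * g y i)"
  assumes P1: "convex_on UNIV P1" and l: "\<forall>i<m. strictly_convex_Rq (q i) (l i)"
    and g_def: "\<And>x i. g x i = l i (matvec (q i) (A i) x)" and lam: "\<forall>i<m. 0 \<le> lam i"
    and xb_feas: "\<forall>i<m. g xb i \<le> 0" and xb_min: "\<And>x. L xb \<le> L x"
    and strict_compl: "\<forall>i<m. lam i = 0 \<longrightarrow> g xb i < 0"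
  obtains \<delta> where "0 < \<delta>"
    and "\<And>z. L z = L xb \<Longrightarrow> dist z xb < \<delta> \<Longrightarrow> (\<forall>i<m. g z i \<le> 0) \<and> P1 z = P1 xb"
proof -
  \<comment> \<open>the inactive constraints stay strictly negative near \<open>xb\<close>\<close>
  define S where "S = (\<Inter>i\<in>{i. i < m \<and> lam i = 0}. {y. g y i < 0})"
  have g_cont: "continuous_on UNIV (\<lambda>x. g x i)" if "i < m" for i
    unfolding g_def using that l by (intro convex_on_continuous convex_on_comp_matvec) auto
  have "open S"
    unfolding S_def by (rule open_INT) (auto intro!: open_Collect_less g_cont continuous_on_const)
  moreover have "xb \<in> S" using strict_compl by (auto simp: S_def)
  ultimately obtain \<delta> where \<delta>: "0 < \<delta>" "ball xb \<delta> \<subseteq> S" using open_contains_ball by blast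
  have "(\<forall>i<m. g z i \<le> 0) \<and> P1 z = P1 xb" if z: "L z = L xb" "dist z xb < \<delta>" for z
  proof -
    have L_eq: "L y = P1 y + (\<Sum>j<m. lam j * l j (matvec (q j) (A j) y))" for y
      by (simp add: L_def g_def)
    have active: "g z i = g xb i" if "i < m" "lam i \<noteq> 0" for i
    proof -
      have "0 < lam i" using that lam by (simp add: less_le)
      from this xb_min z(1) have "matvec (q i) (A i) z = matvec (q i) (A i) xb"
        unfolding L_eq by (rule lagrangian_minimizers_same_active_image[OF P1 l lam \<open>i < m\<close>])
      then show ?thesis by (simp add: g_def)
    qed
    have "z \<in> S" using z(2) \<delta>(2) by (auto simp: dist_commute)
    have "g z i \<le> 0" if i: "i < m" for i
    proof (cases "lam i = 0")
      case True
      then show ?thesis using \<open>z \<in> S\<close> i unfolding S_def by fastforce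
    next
      case False
      then show ?thesis using active[OF i] xb_feas i by simp
    qed
    moreover have "(\<Sum>i<m. lam i * g z i) = (\<Sum>i<m. lam i * g xb i)"
      using active by (intro sum.cong) auto
    then have "P1 z = P1 xb" using z(1) by (simp add: L_def)
    ultimately show ?thesis by blast
  qed
  then show ?thesis using that \<delta>(1) by blast
qed

lemma KL_at_of_lagrangian_error_bound:
  fixes F :: "real^'n \<Rightarrow> ereal" and P1 :: "real^'n \<Rightarrow> real" and g :: "real^'n \<Rightarrow> nat \<Rightarrow> real" and m :: nat and lam :: "nat \<Rightarrow> real"
  defines "L y \<equiv> P1 y + (\<Sum>i<m. lam i * g y i)"
  assumes F_def: "\<And>x. F x = (if \<forall>i<m. g x i \<le> 0 then ereal (P1 x) else \<infinity>)"
    and lam: "\<forall>i<m. 0 \<le> lam i" and xb_feas: "\<forall>i<m. g xb i \<le> 0"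
    and L_min: "\<And>x. L xb \<le> L x" and L_xb: "L xb = P1 xb"
    and \<alpha>: "\<alpha> < 1" and C: "0 < C" and \<rho>: "0 < \<rho>" and b: "0 < b"
    and error_bound: "\<forall>x. dist x xb < \<rho> \<longrightarrow> L x - L xb < b \<longrightarrow>
       (\<exists>z. L z = L xb \<and> dist x z \<le> C * (L x - L xb) powr (1 - \<alpha>) \<and> dist z xb < \<delta>)"
    and near: "\<And>z. L z = L xb \<Longrightarrow> dist z xb < \<delta> \<Longrightarrow> (\<forall>i<m. g z i \<le> 0) \<and> P1 z = P1 xb"
  shows "KL_at F \<alpha> xb"
proof (rule KL_at_of_error_bound[OF _ \<alpha> C \<rho> b])
  have Fxb: "F xb = ereal (P1 xb)" using F_def xb_feas by simp
  have L_le_P1: "L x \<le> P1 x" if "\<forall>i<m. g x i \<le> 0" for x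
  proof -
    have "(\<Sum>i<m. lam i * g x i) \<le> 0"
      using that lam by (intro sum_nonpos) (simp add: mult_nonneg_nonpos)
    then show ?thesis by (simp add: L_def)
  qed
  show "xb \<in> dom_subdiff F"
  proof (rule minimizer_in_dom_subdiff)
    show "F xb \<le> F x" for x
      unfolding Fxb F_def[of x] using L_min[of x] L_le_P1[of x] L_xb by auto
  qed (simp add: Fxb)
  fix x assume x: "dist x xb < \<rho>" "F xb < F x" "F x < F xb + ereal b"
  have x_feas: "\<forall>i<m. g x i \<le> 0"
  proof (rule ccontr)
    assume "\<not> ?thesis"
    then have "F x = \<infinity>" using F_def by simp
    then show False using x(3) Fxb by simp
  qed
  define T where "T = P1 x - P1 xb"
  have FT: "real_of_ereal (F x - F xb) = T" using x_feas F_def Fxb by (simp add: T_def)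
  have L_T: "0 \<le> L x - L xb" "L x - L xb \<le> T"
    using L_min[of x] L_le_P1[OF x_feas] L_xb by (auto simp: T_def)
  have "T < b" using x(3) x_feas F_def Fxb by (simp add: T_def)
  then obtain z where z: "L z = L xb" "dist x z \<le> C * (L x - L xb) powr (1 - \<alpha>)" "dist z xb < \<delta>"
    using error_bound x(1) L_T by fastforce
  have "F z = F xb" using near[OF z(1,3)] F_def Fxb by simp
  moreover have "C * (L x - L xb) powr (1 - \<alpha>) \<le> C * T powr (1 - \<alpha>)"
    using L_T \<alpha> C by (intro mult_left_mono powr_mono2) auto
  ultimately show "\<exists>z. F z \<le> F xb \<and> dist x z \<le> C * real_of_ereal (F x - F xb) powr (1 - \<alpha>)"
    using z(2) unfolding FT by (intro exI[of _ z]) auto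
qed

theorem mainTheorem13:
  fixes P1 :: "real^'n \<Rightarrow> real"
    and m :: nat
    and q :: "nat \<Rightarrow> nat"
    and A :: "nat \<Rightarrow> nat \<Rightarrow> 'n \<Rightarrow> real"
    and l :: "nat \<Rightarrow> (nat \<Rightarrow> real) \<Rightarrow> real"
    and g :: "real^'n \<Rightarrow> nat \<Rightarrow> real"
    and F :: "real^'n \<Rightarrow> ereal"
    and xbar :: "real^'n"
    and lam :: "nat \<Rightarrow> real"
    and \<alpha> :: real
  assumes P1_convex: "convex_on UNIV P1"
    and P1_cont: "continuous_on UNIV P1"
    and l_sconvex: "\<forall>i<m. strictly_convex_Rq (q i) (l i)"
    and g_def: "\<And>x i. g x i = l i (matvec (q i) (A i) x)"
    and feasible: "\<exists>x. \<forall>i<m. g x i \<le> 0"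
    and F_def: "\<And>x. F x = (if (\<forall>i<m. g x i \<le> 0) then ereal (P1 x) else \<infinity>)"
    and argmin: "\<forall>x. F xbar \<le> F x"
    and lam_nonneg: "\<forall>i<m. lam i \<ge> 0"
    and lagrange: "(INF x. ereal (P1 x + (\<Sum>i<m. lam i * g x i))) = (INF x. F x)"
    and bounded: "(INF x. F x) > -\<infinity>"
    and \<alpha>_range: "0 < \<alpha>" "\<alpha> < 1"
    and KL_lag: "KL_function (\<lambda>x. ereal (P1 x + (\<Sum>i<m. lam i * g x i))) \<alpha>"
    and strict_compl: "\<forall>i<m. lam i = 0 \<longrightarrow> g xbar i < 0"
  shows "KL_at F \<alpha> xbar"
proof -
  define L where "L x = P1 x + (\<Sum>i<m. lam i * g x i)" for x
  note lagrange_facts = F_def feasible argmin lam_nonneg lagrange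
  have xbar_feas: "\<forall>i<m. g xbar i \<le> 0" by (rule lagrange_minimizer_feasible[OF lagrange_facts])
  have L_xbar: "L xbar = P1 xbar" unfolding L_def by (rule lagrange_compl_slackness[OF lagrange_facts])
  have L_min: "L xbar \<le> L x" for x
    using lagrange_lagrangian_lower_bound[OF lagrange_facts] L_xbar by (simp add: L_def)
  have L_convex: "convex_on UNIV L"
    unfolding L_def g_def using P1_convex l_sconvex lam_nonneg
    by (intro convex_on_add convex_on_weighted_sum_comp_matvec) auto
  have KL_L: "KL_at (\<lambda>x. ereal (L x)) \<alpha> xbar"
    using KL_lag minimizer_in_dom_subdiff[of "\<lambda>x. ereal (L x)" xbar] L_min
    unfolding KL_function_def L_def by simp
  obtain C where C: "0 < C" and error_bound: "\<And>\<epsilon>. 0 < \<epsilon> \<Longrightarrow>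
      \<exists>\<rho>>0. \<exists>b>0. \<forall>x. dist x xbar < \<rho> \<longrightarrow> L x - L xbar < b \<longrightarrow>
        (\<exists>z. L z = L xbar \<and> dist x z \<le> C * (L x - L xbar) powr (1 - \<alpha>) \<and> dist z xbar < \<epsilon>)"
    using KL_error_bound_at_minimizer[OF L_convex L_min KL_L \<alpha>_range] by blast
  obtain \<delta> where "0 < \<delta>" and near: "\<And>z. L z = L xbar \<Longrightarrow> dist z xbar < \<delta> \<Longrightarrow>
      (\<forall>i<m. g z i \<le> 0) \<and> P1 z = P1 xbar"
    using lagrangian_minimizers_near_solution[OF P1_convex l_sconvex g_def lam_nonneg xbar_feas
      L_min[unfolded L_def] strict_compl] unfolding L_def by blast
  then obtain \<rho> b where \<rho>: "0 < \<rho>" and b: "0 < b" and bound: "\<forall>x. dist x xbar < \<rho> \<longrightarrow> L x - L xbar < b \<longrightarrow>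
      (\<exists>z. L z = L xbar \<and> dist x z \<le> C * (L x - L xbar) powr (1 - \<alpha>) \<and> dist z xbar < \<delta>)"
    using error_bound by blast
  show ?thesis
    by (rule KL_at_of_lagrangian_error_bound[OF F_def lam_nonneg xbar_feas L_min[unfolded L_def]
          L_xbar[unfolded L_def] \<alpha>_range(2) C \<rho> b bound[unfolded L_def] near[unfolded L_def]])
qed

end
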